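(* In the general setting of the context, let $(x_1^*,\dots,x_n^* )$ be an optimal solution attaining $P^*$ together with a vector $y^*\in\mathbb{R}^m_+$ such that $y^*_i=0$ whenever $(\sum_tA_tx^*_t)_i<b_i$ and $A_t^\top y^*$ is a supergradient of $f_t$ at $x_t^*$ for every $t$. For $i\in[m]$ and $t\in[n]$ let $$R_t^i=\frac{1}{n-t+1}\sum_{s=t}^n(A_{\sigma(s)}x^*_{\sigma(s)})_i-\frac{b_i}{n}.$$ Then $$\mathbb{P}\Big(\exists\,t\in[n(1-\epsilon)],\ \exists\,i\in[m]:\ R_t^i>\frac{b_i}{n}2^{-\kappa(t)/2}\epsilon^{1/2}\Big)\le mL\exp\Big(-\frac{\epsilon^2}{6\gamma}\Big).$$
   Context: General setting. Let $m,k,n$ be positive integers and $b\in\mathbb{R}^m_{++}$. Let $\mathcal G$ be the set of proper, concave, upper semicontinuous functions $f:\mathbb{R}^k\to[-\infty,\infty)$ with bounded superlevel sets such that $\mathrm{dom} f\subset\mathbb{R}^k_+$ and $f(0)=0$. Let $f_1,\dots,f_n\in\mathcal G$ and $A_1,\dots,A_n\in\mathbb{R}_+^{m\times k}$. Let $P^*=\sup\{\sum_{t=1}^n f_t(x_t): x_t\in\mathbb{R}^k,\ \sum_{t=1}^n A_tx_t\le b\}$ and assume $P^*>0$. Let $\gamma>0$ satisfy, for every $t\in[n]$: $(A_tx)_i/b_i\le\gamma$ for all $i\in[m]$ and all $x$ with $f_t(x)\ge0$, and $f_t(x)\le\gamma P^*$ for all $x\in\mathrm{dom} f_t$. Let $\epsilon\in(0,1)$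 be such that $L=\log_2(1/\epsilon)$ and $n\epsilon$ are integers. Let $\sigma$ be a uniformly random permutation of $[n]$; probabilities are over $\sigma$. For $t\in[n(1-\epsilon)]$, $\kappa(t)=\lfloor\log_2\frac{n-t}{n\epsilon}\rfloor+1$, i.e. $\kappa(t)=k\in[L]$ iff $n(1-2^k\epsilon)<t\le n(1-2^{k-1}\epsilon)$. *)

theory Defs
  imports "HOL-Analysis.Analysis" "HOL-Probability.Probability"
begin

definition hypograph :: "('a::real_vector \<Rightarrow> ereal) \<Rightarrow> ('a \<times> real) set" where
  "hypograph f = {(x, c). ereal c \<le> f x}"

definition edom :: "('a \<Rightarrow> ereal) \<Rightarrow> 'a set" where
  "edom f = {x. f x \<noteq> -\<infinity>}"

definition proper_concave_fun :: "('a::real_vector \<Rightarrow> ereal) \<Rightarrow> bool" where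
  "proper_concave_fun f \<longleftrightarrow> (\<forall>x. f x \<noteq> \<infinity>) \<and> edom f \<noteq> {} \<and> convex (hypograph f)"

definition usc_fun :: "('a::topological_space \<Rightarrow> ereal) \<Rightarrow> bool" where
  "usc_fun f \<longleftrightarrow> (\<forall>c::real. closed {x. ereal c \<le> f x})"

definition bounded_superlevel :: "('a::metric_space \<Rightarrow> ereal) \<Rightarrow> bool" where
  "bounded_superlevel f \<longleftrightarrow> (\<forall>c::real. bounded {x. ereal c \<le> f x})"

definition classG :: "(real^'k \<Rightarrow> ereal) \<Rightarrow> bool" where
  "classG f \<longleftrightarrow> proper_concave_fun f \<and> usc_fun f \<and> bounded_superlevel f
     \<and> edom f \<subseteq> {x. \<forall>j. 0 \<le> x $ j} \<and> f 0 = 0"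

definition supergradient :: "('a::real_inner \<Rightarrow> ereal) \<Rightarrow> 'a \<Rightarrow> 'a \<Rightarrow> bool" where
  "supergradient f x g \<longleftrightarrow> (\<forall>z. f z \<le> f x + ereal (g \<bullet> (z - x)))"

definition kappa :: "nat \<Rightarrow> real \<Rightarrow> nat \<Rightarrow> int" where
  "kappa n \<epsilon> t = \<lfloor>log 2 ((real n - real t) / (real n * \<epsilon>))\<rfloor> + 1"

definition Rti :: "nat \<Rightarrow> (nat \<Rightarrow> real^'k^'m) \<Rightarrow> (nat \<Rightarrow> real^'k) \<Rightarrow> real^'m
     \<Rightarrow> (nat \<Rightarrow> nat) \<Rightarrow> nat \<Rightarrow> 'm \<Rightarrow> real" where
  "Rti n A xs b \<sigma> t i = (1 / (real n - real t + 1)) * (\<Sum>s=t..n. (A (\<sigma> s) *v xs (\<sigma> s)) $ i) - b $ i / real n"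

end

theory Submission
  imports Defs "HOL-Combinatorics.Multiset_Permutations"
begin

text \<open>Fix a resource \<open>i\<close> and put \<open>a s = (A s x*(s))_i / b_i\<close>. Setting one block of an optimal
  solution to zero keeps it feasible, so every block has nonnegative value and hence
  \<open>0 \<le> a s \<le> \<gamma>\<close>; feasibility gives \<open>\<Sum>s. a s \<le> 1\<close>. The event \<open>R_t^i > (b_i/n) \<eta>\<close> says that the
  suffix from position \<open>t\<close> of the randomly ordered loads has average above \<open>(1 + \<eta>)/n\<close>.

  Revealing the ordering from the front, \<open>exp (\<lambda>(r) * mean of the r unrevealed loads)\<close> is a
  supermartingale for the rate \<open>\<lambda>(r) = \<Lambda> - \<Lambda>^2 \<gamma> / (2 (r - 1))\<close> (\<open>supermartingale_rate\<close>): the bound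
  \<open>exp (-x) \<le> 1 - x + x^2/2\<close> leaves a quadratic term, which is paid for by the increase of the rate.
  By the maximal inequality (an induction on the number of unrevealed loads) some suffix of length
  at least \<open>r0\<close> is too heavy with probability at most \<open>exp (-(r0 - 1) \<eta>^2 / (3 \<gamma> n))\<close>. On the
  dyadic block \<open>\<kappa>(t) = k\<close> all suffixes have length at least \<open>n \<epsilon> 2^(k-1)\<close> and \<open>\<eta>^2 = 2^(-k) \<epsilon>\<close>, so
  each of the \<open>m L\<close> pairs of a resource and a block contributes at most \<open>exp (-\<epsilon>^2 / (6 \<gamma>))\<close>.\<close>

section \<open>Exponential moments of sampling without replacement\<close>

lemma exp_neg_le_quadratic:
  fixes x :: real
  assumes "0 \<le> x"
  shows "exp (-x) \<le> 1 - x + x^2 / 2"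
proof -
  let ?h = "\<lambda>x::real. 1 - x + x^2 / 2 - exp (-x)"
  have "?h 0 \<le> ?h x"
  proof (rule DERIV_nonneg_imp_nondecreasing[OF assms])
    fix y :: real
    assume "0 \<le> y" "y \<le> x"
    have "(?h has_real_derivative (-1 + y + exp (-y))) (at y)"
      by (auto intro!: derivative_eq_intros simp: power2_eq_square)
    moreover have "0 \<le> -1 + y + exp (-y)"
      using exp_ge_add_one_self[of "-y"] by linarith
    ultimately show "\<exists>d. (?h has_real_derivative d) (at y) \<and> 0 \<le> d" by blast
  qed
  then show ?thesis by simp
qed

lemma sum_exp_deviation_from_mean_le:
  fixes a :: "'a \<Rightarrow> real"
  assumes "finite A" "A \<noteq> {}" and bounds: "\<forall>x\<in>A. 0 \<le> a x \<and> a x \<le> \<gamma>" and "0 \<le> s"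
  defines "M \<equiv> sum a A / card A"
  shows "(\<Sum>x\<in>A. exp (s * (M - a x))) \<le> card A * exp (s^2 * \<gamma> * M / 2)"
proof -
  have card_pos: "real (card A) > 0"
    using assms(1,2) by (simp add: card_gt_0_iff)
  have term_le: "exp (s * (M - a x)) \<le> exp (s * M) * (1 + (s^2 * \<gamma> / 2 - s) * a x)"
    if "x \<in> A" for x
  proof -
    have "exp (-(s * a x)) \<le> 1 - s * a x + (s * a x)^2 / 2"
      using exp_neg_le_quadratic bounds that \<open>0 \<le> s\<close> by simp
    also have "(s * a x)^2 \<le> s^2 * (\<gamma> * a x)"
    proof -
      have "a x ^ 2 \<le> \<gamma> * a x" using bounds that by (simp add: power2_eq_square mult_right_mono)
      then have "s^2 * a x ^ 2 \<le> s^2 * (\<gamma> * a x)" by (rule mult_left_mono) simp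
      then show ?thesis by (simp add: power_mult_distrib)
    qed
    finally have "exp (-(s * a x)) \<le> 1 + (s^2 * \<gamma> / 2 - s) * a x"
      by (simp add: algebra_simps)
    then have "exp (s * M) * exp (-(s * a x)) \<le> exp (s * M) * (1 + (s^2 * \<gamma> / 2 - s) * a x)"
      by (rule mult_left_mono) simp
    then show ?thesis by (simp add: exp_add[symmetric] algebra_simps)
  qed
  have total: "(\<Sum>x\<in>A. 1 + (s^2 * \<gamma> / 2 - s) * a x) = card A * (1 + (-s * M + s^2 * \<gamma> * M / 2))"
    using card_pos by (simp add: sum.distrib flip: sum_distrib_left) (simp add: M_def field_simps)
  have "(\<Sum>x\<in>A. exp (s * (M - a x))) \<le> (\<Sum>x\<in>A. exp (s * M) * (1 + (s^2 * \<gamma> / 2 - s) * a x))"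
    by (rule sum_mono) (rule term_le)
  also have "\<dots> = exp (s * M) * (card A * (1 + (-s * M + s^2 * \<gamma> * M / 2)))"
    by (simp only: total flip: sum_distrib_left)
  also have "\<dots> \<le> exp (s * M) * (card A * exp (-s * M + s^2 * \<gamma> * M / 2))"
    by (intro mult_left_mono exp_ge_add_one_self) auto
  also have "\<dots> = card A * exp (s^2 * \<gamma> * M / 2)"
    by (simp add: exp_add[symmetric])
  finally show ?thesis .
qed

definition supermartingale_rate :: "real \<Rightarrow> real \<Rightarrow> nat \<Rightarrow> real" where
  "supermartingale_rate \<Lambda> \<gamma> r = \<Lambda> - \<Lambda>^2 * \<gamma> / (2 * (real r - 1))"

lemma supermartingale_rate_mono:
  assumes "0 \<le> \<gamma>" "2 \<le> r" "r \<le> r'"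
  shows "supermartingale_rate \<Lambda> \<gamma> r \<le> supermartingale_rate \<Lambda> \<gamma> r'"
  using assms unfolding supermartingale_rate_def
  by (intro diff_left_mono divide_left_mono mult_pos_pos) auto

lemma supermartingale_rate_step:
  assumes "0 \<le> \<gamma>" "3 \<le> r" and rate_nonneg: "0 \<le> supermartingale_rate \<Lambda> \<gamma> (r - 1)"
  shows "supermartingale_rate \<Lambda> \<gamma> (r - 1) + (supermartingale_rate \<Lambda> \<gamma> (r - 1) / (real r - 1))^2 * \<gamma> / 2
           \<le> supermartingale_rate \<Lambda> \<gamma> r"
proof -
  define c where "c = \<Lambda>^2 * \<gamma> / 2"
  define \<beta> where "\<beta> = supermartingale_rate \<Lambda> \<gamma> (r - 1)"
  have r: "real r - 1 > 0" "real r - 2 > 0" using assms(2) by auto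
  have \<beta>: "\<beta> = \<Lambda> - c / (real r - 2)"
    using assms(2) by (simp add: \<beta>_def supermartingale_rate_def c_def of_nat_diff)
  have c: "0 \<le> c" using \<open>0 \<le> \<gamma>\<close> by (simp add: c_def)
  have "\<beta> \<le> \<Lambda>" using c r by (simp add: \<beta>)
  then have "\<beta>^2 \<le> \<Lambda>^2" using rate_nonneg by (intro power_mono) (simp_all add: \<beta>_def)
  then have "(\<beta> / (real r - 1))^2 * \<gamma> / 2 \<le> c / (real r - 1)^2"
    using \<open>0 \<le> \<gamma>\<close> r
    by (simp add: c_def power_divide mult.commute[of 2] divide_right_mono mult_right_mono)
  also have "\<dots> \<le> c / ((real r - 1) * (real r - 2))"
    using c r by (intro divide_left_mono) (auto simp: power2_eq_square)
  also have "\<dots> = c / (real r - 2) - c / (real r - 1)"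
    using r by (simp add: field_simps)
  finally have "(\<beta> / (real r - 1))^2 * \<gamma> / 2 \<le> c / (real r - 2) - c / (real r - 1)" .
  moreover have "supermartingale_rate \<Lambda> \<gamma> r = \<Lambda> - c / (real r - 1)"
    by (simp add: supermartingale_rate_def c_def)
  ultimately show ?thesis unfolding \<beta>_def[symmetric] using \<beta> by linarith
qed

lemma sum_exp_leave_one_out_le:
  fixes a :: "'a \<Rightarrow> real"
  assumes "finite A" "3 \<le> card A" and bounds: "\<forall>x\<in>A. 0 \<le> a x \<and> a x \<le> \<gamma>" and "0 \<le> \<gamma>"
    and rate_nonneg: "0 \<le> supermartingale_rate \<Lambda> \<gamma> (card A - 1)"
  shows "(\<Sum>x\<in>A. exp (supermartingale_rate \<Lambda> \<gamma> (card A - 1) * (sum a (A - {x}) / (card A - 1))))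
           \<le> card A * exp (supermartingale_rate \<Lambda> \<gamma> (card A) * (sum a A / card A))"
proof -
  define r where "r = real (card A)"
  define \<beta> where "\<beta> = supermartingale_rate \<Lambda> \<gamma> (card A - 1)"
  define M where "M = sum a A / r"
  define s where "s = \<beta> / (r - 1)"
  have "A \<noteq> {}" using assms(2) by auto
  have M: "0 \<le> M" using bounds by (auto simp: M_def r_def intro!: sum_nonneg divide_nonneg_nonneg)
  have mean: "\<beta> * (sum a (A - {x}) / (card A - 1)) = \<beta> * M + s * (M - a x)" if "x \<in> A" for x
  proof -
    have "real (card A - 1) = r - 1" "r - 1 > 0" "real (card A) \<noteq> 0"
      using assms(2) by (simp_all add: r_def of_nat_diff)
    then show ?thesis
      using that assms(1) by (simp add: sum_diff1 M_def s_def r_def field_simps)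
  qed
  have "(\<Sum>x\<in>A. exp (\<beta> * (sum a (A - {x}) / (card A - 1))))
          = exp (\<beta> * M) * (\<Sum>x\<in>A. exp (s * (M - a x)))"
    by (simp only: sum_distrib_left, rule sum.cong) (simp_all only: mean exp_add)
  also have "\<dots> \<le> exp (\<beta> * M) * (r * exp (s^2 * \<gamma> * M / 2))"
    using sum_exp_deviation_from_mean_le[OF assms(1) \<open>A \<noteq> {}\<close> bounds, of s] rate_nonneg assms(2)
    by (simp add: M_def r_def s_def \<beta>_def)
  also have "\<dots> = r * exp ((\<beta> + s^2 * \<gamma> / 2) * M)"
    by (simp add: exp_add[symmetric] algebra_simps)
  also have "\<dots> \<le> r * exp (supermartingale_rate \<Lambda> \<gamma> (card A) * M)"
    using supermartingale_rate_step[OF \<open>0 \<le> \<gamma>\<close> assms(2) rate_nonneg] M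
    by (intro mult_left_mono) (simp_all add: \<beta>_def s_def r_def mult_right_mono)
  finally show ?thesis by (simp add: r_def M_def \<beta>_def)
qed

lemma average_le_exp_of_leave_one_out_le:
  fixes a p :: "'a \<Rightarrow> real"
  assumes "finite A" "3 \<le> card A" and bounds: "\<forall>x\<in>A. 0 \<le> a x \<and> a x \<le> \<gamma>" and "0 \<le> \<gamma>"
    and "0 \<le> supermartingale_rate \<Lambda> \<gamma> (card A - 1)"
    and p: "\<forall>x\<in>A. p x \<le> exp (supermartingale_rate \<Lambda> \<gamma> (card A - 1) * (sum a (A - {x}) / (card A - 1)) - R)"
  shows "(\<Sum>x\<in>A. p x) / card A \<le> exp (supermartingale_rate \<Lambda> \<gamma> (card A) * (sum a A / card A) - R)"
proof -
  let ?\<beta> = "supermartingale_rate \<Lambda> \<gamma> (card A - 1)"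
  have "(\<Sum>x\<in>A. p x) \<le> (\<Sum>x\<in>A. exp (?\<beta> * (sum a (A - {x}) / (card A - 1)) - R))"
    using p by (intro sum_mono) auto
  also have "\<dots> = exp (- R) * (\<Sum>x\<in>A. exp (?\<beta> * (sum a (A - {x}) / (card A - 1))))"
    by (simp add: sum_distrib_left mult_exp_exp)
  also have "\<dots> \<le> exp (- R) * (card A * exp (supermartingale_rate \<Lambda> \<gamma> (card A) * (sum a A / card A)))"
    using sum_exp_leave_one_out_le[OF assms(1-5)] by (intro mult_left_mono) auto
  finally show ?thesis
    using assms(2) by (simp add: pos_divide_le_eq mult_exp_exp mult_ac)
qed

section \<open>Heavy suffixes of a random ordering\<close>

definition suffix_exceeds :: "('a \<Rightarrow> real) \<Rightarrow> nat \<Rightarrow> real \<Rightarrow> 'a list \<Rightarrow> bool" where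
  "suffix_exceeds a r0 \<theta> xs \<longleftrightarrow>
     (\<exists>j. j + r0 \<le> length xs \<and> \<theta> * real (length xs - j) < sum_list (map a (drop j xs)))"

lemma suffix_exceeds_length: "suffix_exceeds a r0 \<theta> xs \<Longrightarrow> r0 \<le> length xs"
  unfolding suffix_exceeds_def by auto

lemma suffix_exceeds_Cons:
  "suffix_exceeds a r0 \<theta> (x # xs) \<longleftrightarrow>
     (r0 \<le> Suc (length xs) \<and> \<theta> * real (Suc (length xs)) < sum_list (map a (x # xs)))
     \<or> suffix_exceeds a r0 \<theta> xs"
proof
  assume "suffix_exceeds a r0 \<theta> (x # xs)"
  then obtain j where "j + r0 \<le> length (x # xs)"
    and "\<theta> * real (length (x # xs) - j) < sum_list (map a (drop j (x # xs)))"
    unfolding suffix_exceeds_def by blast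
  then show "(r0 \<le> Suc (length xs) \<and> \<theta> * real (Suc (length xs)) < sum_list (map a (x # xs)))
     \<or> suffix_exceeds a r0 \<theta> xs"
    unfolding suffix_exceeds_def by (cases j) auto
next
  assume "(r0 \<le> Suc (length xs) \<and> \<theta> * real (Suc (length xs)) < sum_list (map a (x # xs)))
     \<or> suffix_exceeds a r0 \<theta> xs"
  then show "suffix_exceeds a r0 \<theta> (x # xs)"
  proof
    assume "r0 \<le> Suc (length xs) \<and> \<theta> * real (Suc (length xs)) < sum_list (map a (x # xs))"
    then show ?thesis unfolding suffix_exceeds_def by (intro exI[of _ 0]) auto
  next
    assume "suffix_exceeds a r0 \<theta> xs"
    then obtain j where "j + r0 \<le> length xs" "\<theta> * real (length xs - j) < sum_list (map a (drop j xs))"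
      unfolding suffix_exceeds_def by blast
    then show ?thesis unfolding suffix_exceeds_def by (intro exI[of _ "Suc j"]) auto
  qed
qed

lemma card_permutations_of_set_filter_Cons:
  assumes "finite A" "A \<noteq> {}"
  shows "card {xs \<in> permutations_of_set A. P xs}
           = (\<Sum>x\<in>A. card {ys \<in> permutations_of_set (A - {x}). P (x # ys)})"
proof -
  have "{xs \<in> permutations_of_set A. P xs}
          = (\<Union>x\<in>A. (#) x ` {ys \<in> permutations_of_set (A - {x}). P (x # ys)})"
    by (subst permutations_of_set_nonempty[OF assms(2)]) blast
  also have "card \<dots> = (\<Sum>x\<in>A. card ((#) x ` {ys \<in> permutations_of_set (A - {x}). P (x # ys)}))"
    using assms(1) by (intro card_UN_disjoint) auto
  finally show ?thesis by (simp add: card_image)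
qed

lemma card_filter_permutations_of_set_le_fact:
  "finite A \<Longrightarrow> card {xs \<in> permutations_of_set A. P xs} \<le> fact (card A)"
  using card_mono[of "permutations_of_set A" "{xs \<in> permutations_of_set A. P xs}"]
  by (simp add: card_permutations_of_set)

lemma card_suffix_exceeds_remove_first:
  fixes a :: "'a \<Rightarrow> real" and \<theta> :: real
  assumes "finite A" "A \<noteq> {}" "sum a A \<le> \<theta> * card A"
  shows "card {xs \<in> permutations_of_set A. suffix_exceeds a r0 \<theta> xs}
           = (\<Sum>x\<in>A. card {ys \<in> permutations_of_set (A - {x}). suffix_exceeds a r0 \<theta> ys})"
proof -
  have "suffix_exceeds a r0 \<theta> (x # ys) \<longleftrightarrow> suffix_exceeds a r0 \<theta> ys"
    if "x \<in> A" "ys \<in> permutations_of_set (A - {x})" for x ys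
  proof -
    have "x # ys \<in> permutations_of_set A"
      using that by (auto simp: permutations_of_set_def)
    then have "sum_list (map a (x # ys)) = sum a A" "Suc (length ys) = card A"
      by (auto simp: permutations_of_set_def sum_list_distinct_conv_sum_set distinct_card)
    then show ?thesis using assms(3) by (simp add: suffix_exceeds_Cons)
  qed
  then show ?thesis
    unfolding card_permutations_of_set_filter_Cons[OF assms(1,2)]
    by (intro sum.cong refl arg_cong[where f = card] Collect_cong) auto
qed

lemma card_suffix_exceeds_le:
  fixes a :: "'a \<Rightarrow> real"
  assumes "0 \<le> \<gamma>" "2 \<le> r0" and rate_nonneg: "0 \<le> supermartingale_rate \<Lambda> \<gamma> r0"
  shows "finite A \<Longrightarrow> r0 \<le> card A \<Longrightarrow> \<forall>x\<in>A. 0 \<le> a x \<and> a x \<le> \<gamma> \<Longrightarrow>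
    card {xs \<in> permutations_of_set A. suffix_exceeds a r0 \<theta> xs} / fact (card A)
      \<le> exp (supermartingale_rate \<Lambda> \<gamma> (card A) * (sum a A / card A)
             - supermartingale_rate \<Lambda> \<gamma> r0 * \<theta>)"
proof (induction "card A" arbitrary: A rule: less_induct)
  case (less A)
  let ?rate = "supermartingale_rate \<Lambda> \<gamma>"
  let ?bad = "\<lambda>B. {xs \<in> permutations_of_set B. suffix_exceeds a r0 \<theta> xs}"
  define r where "r = card A"
  define S where "S = sum a A"
  have "A \<noteq> {}" using less.prems(2) \<open>2 \<le> r0\<close> by auto
  then have r_pos: "0 < real r" using less.prems(1) by (simp add: r_def card_gt_0_iff)
  show ?case
  proof (cases "\<theta> * r < S")
    case True
    have "?rate r0 * \<theta> \<le> ?rate r0 * (S / r)"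
      using True r_pos rate_nonneg by (intro mult_left_mono) (simp_all add: pos_le_divide_eq)
    also have "\<dots> \<le> ?rate r * (S / r)"
      using supermartingale_rate_mono[OF \<open>0 \<le> \<gamma>\<close> \<open>2 \<le> r0\<close> less.prems(2)] less.prems(3)
      by (intro mult_right_mono) (auto simp: r_def S_def intro!: sum_nonneg divide_nonneg_nonneg)
    finally have "1 \<le> exp (?rate r * (S / r) - ?rate r0 * \<theta>)" by simp
    moreover have "card (?bad A) / fact r \<le> (1::real)"
      using card_filter_permutations_of_set_le_fact[OF less.prems(1)]
      by (metis r_def of_nat_fact of_nat_le_iff divide_le_eq_1 fact_gt_zero)
    ultimately show ?thesis unfolding r_def S_def by linarith
  next
    case False
    then have card_bad: "card (?bad A) = (\<Sum>x\<in>A. card (?bad (A - {x})))"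
      using card_suffix_exceeds_remove_first[OF less.prems(1) \<open>A \<noteq> {}\<close>] by (simp add: r_def S_def)
    have card_Diff: "card (A - {x}) = r - 1" if "x \<in> A" for x
      using that less.prems(1) by (simp add: r_def)
    show ?thesis
    proof (cases "r = r0")
      case True
      have "?bad (A - {x}) = {}" if "x \<in> A" for x
        using that True card_Diff \<open>2 \<le> r0\<close>
        by (auto dest!: suffix_exceeds_length length_finite_permutations_of_set)
      then have "card (?bad A) = 0" unfolding card_bad by (intro sum.neutral) simp
      then show ?thesis by (simp only: of_nat_0 div_0 exp_ge_zero)
    next
      case False
      have r: "r0 < r" "3 \<le> r" using False less.prems(2) \<open>2 \<le> r0\<close> by (auto simp: r_def)
      have "card (?bad A) / fact r = (\<Sum>x\<in>A. card (?bad (A - {x})) / fact (r - 1)) / r"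
        using r by (simp add: card_bad fact_reduce[of r] sum_divide_distrib mult.commute)
      also have "\<dots> \<le> exp (?rate r * (S / r) - ?rate r0 * \<theta>)"
        unfolding r_def S_def
      proof (rule average_le_exp_of_leave_one_out_le[OF less.prems(1) _ less.prems(3) \<open>0 \<le> \<gamma>\<close>])
        have "r0 \<le> card A - 1" using r by (simp add: r_def)
        then show "0 \<le> ?rate (card A - 1)"
          using rate_nonneg supermartingale_rate_mono[OF \<open>0 \<le> \<gamma>\<close> \<open>2 \<le> r0\<close>] by (meson order_trans)
        show "\<forall>x\<in>A. card (?bad (A - {x})) / fact (card A - 1)
                 \<le> exp (?rate (card A - 1) * (sum a (A - {x}) / (card A - 1)) - ?rate r0 * \<theta>)"
        proof
          fix x assume "x \<in> A"
          then show "card (?bad (A - {x})) / fact (card A - 1)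
                 \<le> exp (?rate (card A - 1) * (sum a (A - {x}) / (card A - 1)) - ?rate r0 * \<theta>)"
            using less.hyps[of "A - {x}"] less.prems r card_Diff[OF \<open>x \<in> A\<close>] by (auto simp: r_def)
        qed
      qed (use r in \<open>simp add: r_def\<close>)
      finally show ?thesis by (simp add: r_def S_def)
    qed
  qed
qed

lemma card_suffix_exceeds_le_exp:
  fixes a :: "'a \<Rightarrow> real" and \<gamma> \<eta> :: real
  assumes "finite A" and bounds: "\<forall>x\<in>A. 0 \<le> a x \<and> a x \<le> \<gamma>" and "0 < \<gamma>" and "sum a A \<le> 1"
    and "0 < \<eta>" "\<eta> \<le> 1/2" "2 \<le> r0"
  shows "card {xs \<in> permutations_of_set A. suffix_exceeds a r0 ((1 + \<eta>) / card A) xs} / fact (card A)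
           \<le> exp (- ((real r0 - 1) * \<eta>^2 / (3 * \<gamma> * card A)))"
proof (cases "r0 \<le> card A")
  case False
  then have "{xs \<in> permutations_of_set A. suffix_exceeds a r0 ((1 + \<eta>) / card A) xs} = {}"
    by (auto dest!: suffix_exceeds_length length_finite_permutations_of_set)
  then show ?thesis by (simp only: card.empty of_nat_0 div_0 exp_ge_zero)
next
  case True
  define n where "n = real (card A)"
  define N where "N = real r0 - 1"
  \<comment> \<open>This \<open>\<Lambda>\<close> minimises the exponent \<open>(\<Lambda> - (1 + \<eta>) \<lambda>(r0)) / n\<close> reached below.\<close>
  define \<Lambda> where "\<Lambda> = N * \<eta> / ((1 + \<eta>) * \<gamma>)"
  let ?rate = "supermartingale_rate \<Lambda> \<gamma>"
  have n: "0 < n" and N: "1 \<le> N" using True \<open>2 \<le> r0\<close> by (auto simp: n_def N_def)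
  \<comment> \<open>Naming \<open>1 + \<eta>\<close> keeps \<open>field_simps\<close> from distributing it, so it can clear the denominators.\<close>
  define p where "p = 1 + \<eta>"
  have "0 < p" using \<open>0 < \<eta>\<close> by (simp add: p_def)
  have \<Lambda>: "0 \<le> \<Lambda>" using N \<open>0 < \<eta>\<close> \<open>0 < \<gamma>\<close> by (simp add: \<Lambda>_def)
  have rate_r0: "?rate r0 = N * \<eta> * (2 + \<eta>) / (2 * (1 + \<eta>)^2 * \<gamma>)"
    unfolding supermartingale_rate_def \<Lambda>_def N_def[symmetric] p_def[symmetric]
    using N \<open>0 < p\<close> \<open>0 < \<gamma>\<close>
    by (simp add: power2_eq_square field_simps) (simp add: p_def algebra_simps)
  have "0 \<le> ?rate r0" using N \<open>0 < \<eta>\<close> \<open>0 < \<gamma>\<close> by (simp add: rate_r0)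
  then have "card {xs \<in> permutations_of_set A. suffix_exceeds a r0 ((1 + \<eta>) / n) xs} / fact (card A)
      \<le> exp (?rate (card A) * (sum a A / n) - ?rate r0 * ((1 + \<eta>) / n))"
    using card_suffix_exceeds_le[of \<gamma> r0 \<Lambda> A a "(1 + \<eta>) / n"] assms True by (simp add: n_def)
  also have "?rate (card A) * (sum a A / n) - ?rate r0 * ((1 + \<eta>) / n)
      \<le> \<Lambda> * (1 / n) - ?rate r0 * ((1 + \<eta>) / n)"
  proof -
    have "?rate (card A) \<le> \<Lambda>"
      using \<open>0 < \<gamma>\<close> True \<open>2 \<le> r0\<close> by (simp add: supermartingale_rate_def)
    moreover have "0 \<le> sum a A / n" using bounds n by (auto intro!: sum_nonneg divide_nonneg_nonneg)
    moreover have "sum a A / n \<le> 1 / n" using n \<open>sum a A \<le> 1\<close> by (simp add: divide_right_mono)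
    ultimately have "?rate (card A) * (sum a A / n) \<le> \<Lambda> * (1 / n)"
      using \<Lambda> by (intro mult_mono) auto
    then show ?thesis by simp
  qed
  also have "\<Lambda> * (1 / n) - ?rate r0 * ((1 + \<eta>) / n) = - (N * \<eta>^2 / (2 * (1 + \<eta>) * \<gamma> * n))"
    unfolding rate_r0 unfolding \<Lambda>_def p_def[symmetric]
    using N n \<open>0 < p\<close> \<open>0 < \<gamma>\<close> by (simp add: power2_eq_square field_simps)
  also have "\<dots> \<le> - (N * \<eta>^2 / (3 * \<gamma> * n))"
    using N n \<open>0 < \<eta>\<close> \<open>\<eta> \<le> 1/2\<close> \<open>0 < \<gamma>\<close>
    by (simp add: divide_left_mono mult_right_mono)
  finally show ?thesis by (simp add: n_def N_def)
qed

lemma prob_permutes_map_le: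
  assumes "distinct ys"
  shows "measure_pmf.prob (pmf_of_set {\<sigma>. \<sigma> permutes set ys}) {\<sigma>. Q (map \<sigma> ys)}
           \<le> card {xs \<in> permutations_of_set (set ys). Q xs} / fact (length ys)"
proof -
  let ?P = "{\<sigma>. \<sigma> permutes set ys}"
  have "finite ?P" by (simp add: finite_permutations)
  moreover have "?P \<noteq> {}" using permutes_id by blast
  moreover have "card ?P = fact (length ys)"
    using assms by (simp add: card_permutations distinct_card)
  moreover have "card (?P \<inter> {\<sigma>. Q (map \<sigma> ys)}) \<le> card {xs \<in> permutations_of_set (set ys). Q xs}"
  proof (rule card_inj_on_le)
    show "inj_on (\<lambda>\<sigma>. map \<sigma> ys) (?P \<inter> {\<sigma>. Q (map \<sigma> ys)})"
    proof (rule inj_onI, rule ext)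
      fix \<sigma> \<tau> x
      assume "\<sigma> \<in> ?P \<inter> {\<sigma>. Q (map \<sigma> ys)}" "\<tau> \<in> ?P \<inter> {\<sigma>. Q (map \<sigma> ys)}" "map \<sigma> ys = map \<tau> ys"
      then show "\<sigma> x = \<tau> x"
        by (cases "x \<in> set ys") (auto simp: permutes_not_in)
    qed
    show "(\<lambda>\<sigma>. map \<sigma> ys) ` (?P \<inter> {\<sigma>. Q (map \<sigma> ys)}) \<subseteq> {xs \<in> permutations_of_set (set ys). Q xs}"
      using assms
      by (auto simp: permutations_of_set_def permutes_image distinct_map
          intro: inj_on_subset[OF permutes_inj_on])
  qed simp
  ultimately show ?thesis
    by (simp add: measure_pmf_of_set divide_right_mono)
qed

lemma dyadic_block_parameters:
  fixes \<epsilon> :: real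
  assumes "0 < n" "0 < \<epsilon>" "\<epsilon> \<le> 1/2" "1 \<le> k"
  defines "N \<equiv> real n * \<epsilon> * 2 powr (real k - 1)"
    and "\<eta> \<equiv> 2 powr (- real k / 2) * sqrt \<epsilon>"
  shows "0 < \<eta>" "\<eta> \<le> 1/2" "2 \<le> nat \<lceil>N\<rceil> + 1"
    and "\<epsilon>^2 / 2 \<le> (real (nat \<lceil>N\<rceil> + 1) - 1) * \<eta>^2 / n"
proof -
  have N: "0 < N" using assms(1,2) by (simp add: N_def)
  then show "2 \<le> nat \<lceil>N\<rceil> + 1" by linarith
  show "0 < \<eta>" using \<open>0 < \<epsilon>\<close> by (simp add: \<eta>_def)
  have \<eta>_sq: "\<eta>^2 = 2 powr (- real k) * \<epsilon>"
  proof -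
    have "(2 powr (- real k / 2))^2 = (2::real) powr (- real k)"
      by (simp add: power2_eq_square powr_add[symmetric])
    then show ?thesis using \<open>0 < \<epsilon>\<close> by (simp add: \<eta>_def power_mult_distrib)
  qed
  show "\<eta> \<le> 1/2"
  proof (rule power2_le_imp_le)
    have "2 powr (- real k) \<le> (2::real) powr (-1)" using \<open>1 \<le> k\<close> by (intro powr_mono) auto
    then have "2 powr (- real k) * \<epsilon> \<le> 1/2 * (1/2)"
      using \<open>0 < \<epsilon>\<close> \<open>\<epsilon> \<le> 1/2\<close> by (intro mult_mono) (auto simp: powr_minus)
    then show "\<eta>^2 \<le> (1/2)^2" unfolding \<eta>_sq by (simp add: power2_eq_square)
  qed simp
  have "2 powr (real k - 1) * 2 powr (- real k) = (2::real) powr (-1)"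
    by (simp add: powr_add[symmetric])
  then have "\<epsilon>^2 / 2 = N * \<eta>^2 / n"
    using \<open>0 < n\<close> unfolding \<eta>_sq by (simp add: N_def power2_eq_square powr_minus field_simps)
  also have "\<dots> \<le> (real (nat \<lceil>N\<rceil> + 1) - 1) * \<eta>^2 / n"
    using N by (intro divide_right_mono mult_right_mono) auto
  finally show "\<epsilon>^2 / 2 \<le> (real (nat \<lceil>N\<rceil> + 1) - 1) * \<eta>^2 / n" .
qed

lemma prob_suffix_exceeds_dyadic_block_le:
  fixes a :: "nat \<Rightarrow> real" and \<gamma> \<epsilon> :: real
  assumes "0 < n" and bounds: "\<forall>s\<in>{1..n}. 0 \<le> a s \<and> a s \<le> \<gamma>" and "0 < \<gamma>"
    and "sum a {1..n} \<le> 1" and "0 < \<epsilon>" "\<epsilon> \<le> 1/2" and "1 \<le> k"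
  defines "r0 \<equiv> nat \<lceil>real n * \<epsilon> * 2 powr (real k - 1)\<rceil> + 1"
    and "\<eta> \<equiv> 2 powr (- real k / 2) * sqrt \<epsilon>"
  shows "measure_pmf.prob (pmf_of_set {\<sigma>. \<sigma> permutes {1..n}})
           {\<sigma>. suffix_exceeds a r0 ((1 + \<eta>) / real n) (map \<sigma> [1..<Suc n])}
         \<le> exp (- (\<epsilon>^2) / (6 * \<gamma>))"
proof -
  note params = dyadic_block_parameters[OF \<open>0 < n\<close> \<open>0 < \<epsilon>\<close> \<open>\<epsilon> \<le> 1/2\<close> \<open>1 \<le> k\<close>,
      folded r0_def \<eta>_def]
  have "measure_pmf.prob (pmf_of_set {\<sigma>. \<sigma> permutes {1..n}})
           {\<sigma>. suffix_exceeds a r0 ((1 + \<eta>) / real n) (map \<sigma> [1..<Suc n])}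
         \<le> card {xs \<in> permutations_of_set {1..n}. suffix_exceeds a r0 ((1 + \<eta>) / real n) xs} / fact n"
    using prob_permutes_map_le[of "[1..<Suc n]"]
    by (simp del: upt_Suc add: atLeastLessThanSuc_atLeastAtMost)
  also have "\<dots> \<le> exp (- ((real r0 - 1) * \<eta>^2 / (3 * \<gamma> * n)))"
    using card_suffix_exceeds_le_exp[of "{1..n}" a \<gamma> \<eta> r0] assms(2-4) params(1-3) by simp
  also have "\<dots> \<le> exp (- (\<epsilon>^2) / (6 * \<gamma>))"
  proof -
    have "\<epsilon>^2 / (6 * \<gamma>) = (\<epsilon>^2 / 2) / (3 * \<gamma>)" by simp
    also have "\<dots> \<le> ((real r0 - 1) * \<eta>^2 / n) / (3 * \<gamma>)"
      using params(4) \<open>0 < \<gamma>\<close> by (intro divide_right_mono) auto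
    finally show ?thesis by (simp add: mult.commute mult.left_commute)
  qed
  finally show ?thesis .
qed

section \<open>Application to the allocation problem\<close>

lemma ereal_sum_eq_real_summand_finite:
  fixes f :: "'a \<Rightarrow> ereal"
  assumes "sum f T = ereal c" "finite T" "t \<in> T"
  shows "\<bar>f t\<bar> \<noteq> \<infinity>"
  using assms sum_Inf[of f T] by auto

lemma optimal_component_value_nonneg:
  fixes f :: "nat \<Rightarrow> real^'k::finite \<Rightarrow> ereal" and A :: "nat \<Rightarrow> real^'k^'m::finite"
  assumes Pstar_def: "ereal Pstar = (SUP x\<in>{x. \<forall>i. (\<Sum>t=1..n. A t *v x t) $ i \<le> b $ i}. \<Sum>t=1..n. f t (x t))"
    and xs_feas: "\<forall>i. (\<Sum>t=1..n. A t *v xs t) $ i \<le> b $ i"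
    and xs_opt: "(\<Sum>t=1..n. f t (xs t)) = ereal Pstar"
    and t0: "t0 \<in> {1..n}" and "f t0 0 = 0" and load_nonneg: "\<forall>i. 0 \<le> (A t0 *v xs t0) $ i"
  shows "0 \<le> f t0 (xs t0)"
proof -
  let ?T = "{1..n} - {t0}"
  define x' where "x' = xs(t0 := 0)"
  define g where "g t = real_of_ereal (f t (xs t))" for t
  have g: "f t (xs t) = ereal (g t)" if "t \<in> {1..n}" for t
  proof -
    have "\<bar>f t (xs t)\<bar> \<noteq> \<infinity>"
      using ereal_sum_eq_real_summand_finite[OF xs_opt _ that] by simp
    then show ?thesis by (simp add: g_def ereal_real)
  qed
  have "\<forall>i. (\<Sum>t=1..n. A t *v x' t) $ i \<le> b $ i"
  proof
    fix i
    have "(\<Sum>t=1..n. A t *v x' t) $ i \<le> (\<Sum>t=1..n. A t *v xs t) $ i"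
      unfolding sum_component using load_nonneg by (intro sum_mono) (simp add: x'_def)
    then show "(\<Sum>t=1..n. A t *v x' t) $ i \<le> b $ i" using xs_feas order_trans by blast
  qed
  then have "(\<Sum>t=1..n. f t (x' t)) \<le> ereal Pstar"
    unfolding Pstar_def by (intro SUP_upper) simp
  moreover have "(\<Sum>t=1..n. f t (x' t)) = ereal (\<Sum>t\<in>?T. g t)"
  proof -
    have "(\<Sum>t=1..n. f t (x' t)) = f t0 (x' t0) + (\<Sum>t\<in>?T. f t (x' t))"
      by (rule sum.remove[OF finite_atLeastAtMost t0])
    also have "\<dots> = (\<Sum>t\<in>?T. ereal (g t))"
      using \<open>f t0 0 = 0\<close> g by (simp add: x'_def)
    finally show ?thesis by simp
  qed
  moreover have "ereal Pstar = ereal (g t0 + (\<Sum>t\<in>?T. g t))"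
  proof -
    have "(\<Sum>t=1..n. f t (xs t)) = f t0 (xs t0) + (\<Sum>t\<in>?T. f t (xs t))"
      by (rule sum.remove[OF finite_atLeastAtMost t0])
    also have "\<dots> = ereal (g t0) + (\<Sum>t\<in>?T. ereal (g t))"
      using g t0 by simp
    finally show ?thesis using xs_opt by simp
  qed
  ultimately have "0 \<le> g t0" by simp
  then show ?thesis using g[OF t0] by simp
qed

lemma optimal_load_fraction_bounds:
  fixes f :: "nat \<Rightarrow> real^'k::finite \<Rightarrow> ereal" and A :: "nat \<Rightarrow> real^'k^'m::finite"
  assumes "\<forall>i. b $ i > 0"
    and fG: "\<forall>t\<in>{1..n}. classG (f t)"
    and A_nonneg: "\<forall>t\<in>{1..n}. \<forall>i j. A t $ i $ j \<ge> 0"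
    and Pstar_def: "ereal Pstar = (SUP x\<in>{x. \<forall>i. (\<Sum>t=1..n. A t *v x t) $ i \<le> b $ i}. \<Sum>t=1..n. f t (x t))"
    and gamma_A: "\<forall>t\<in>{1..n}. \<forall>x. f t x \<ge> 0 \<longrightarrow> (\<forall>i. (A t *v x) $ i / b $ i \<le> \<gamma>)"
    and xs_feas: "\<forall>i. (\<Sum>t=1..n. A t *v xs t) $ i \<le> b $ i"
    and xs_opt: "(\<Sum>t=1..n. f t (xs t)) = ereal Pstar"
    and s: "s \<in> {1..n}"
  shows "0 \<le> (A s *v xs s) $ i / b $ i \<and> (A s *v xs s) $ i / b $ i \<le> \<gamma>"
proof -
  have "\<bar>f s (xs s)\<bar> \<noteq> \<infinity>"
    using ereal_sum_eq_real_summand_finite[OF xs_opt _ s] by simp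
  then have "xs s \<in> edom (f s)" by (auto simp: edom_def)
  moreover have "edom (f s) \<subseteq> {x. \<forall>j. 0 \<le> x $ j}" using fG s by (simp add: classG_def)
  ultimately have "\<forall>j. 0 \<le> xs s $ j" by blast
  then have load_nonneg: "\<forall>i. 0 \<le> (A s *v xs s) $ i"
    using A_nonneg s by (auto simp: matrix_vector_mult_def intro!: sum_nonneg)
  have "0 \<le> f s (xs s)"
    using optimal_component_value_nonneg[OF Pstar_def xs_feas xs_opt s _ load_nonneg] fG s
    by (simp add: classG_def)
  then show ?thesis
    using gamma_A s load_nonneg \<open>\<forall>i. b $ i > 0\<close> by (simp add: less_imp_le)
qed

lemma kappa_dyadic_block:
  assumes "0 < \<epsilon>" "\<epsilon> < 1" "real L = log 2 (1 / \<epsilon>)" "1 \<le> t" "real t \<le> real n * (1 - \<epsilon>)"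
  shows "\<exists>k\<in>{1..L}. kappa n \<epsilon> t = int k \<and> real n * \<epsilon> * 2 powr (real k - 1) \<le> real n - real t"
proof -
  define X where "X = (real n - real t) / (real n * \<epsilon>)"
  have "0 < n" using assms(2,4,5) by (cases n) auto
  have "1 \<le> X"
    using assms(1,5) \<open>0 < n\<close> by (simp add: X_def algebra_simps)
  moreover have "X < 2 powr real L"
  proof -
    have "X < real n / (real n * \<epsilon>)"
      unfolding X_def using assms(1,4) \<open>0 < n\<close> by (intro divide_strict_right_mono) auto
    then show ?thesis using assms(1,3) \<open>0 < n\<close> by simp
  qed
  ultimately have log_X: "0 \<le> log 2 X" "log 2 X < real L"
    by (auto simp: log_less_iff)
  define k where "k = nat (\<lfloor>log 2 X\<rfloor> + 1)"
  have kappa: "kappa n \<epsilon> t = int k"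
    using log_X by (simp add: kappa_def X_def k_def)
  have "0 \<le> \<lfloor>log 2 X\<rfloor>" "\<lfloor>log 2 X\<rfloor> < int L"
    using log_X by (simp, linarith)
  then have "k \<in> {1..L}" by (auto simp: k_def nat_le_iff le_nat_iff)
  moreover have "2 powr (real k - 1) \<le> X"
  proof -
    have "real k - 1 \<le> log 2 X" using log_X by (simp add: k_def)
    then show ?thesis using \<open>1 \<le> X\<close> by (simp add: le_log_iff)
  qed
  then have "real n * \<epsilon> * 2 powr (real k - 1) \<le> real n - real t"
    using assms(1) \<open>0 < n\<close> by (simp add: X_def field_simps)
  ultimately show ?thesis using kappa by blast
qed

lemma suffix_exceeds_if_Rti_gt:
  fixes A :: "nat \<Rightarrow> real^'k::finite^'m::finite"
  assumes "1 \<le> t" "t + r0 \<le> Suc n" "t \<le> n" "0 < b $ i"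
    and "b $ i / real n * \<eta> < Rti n A xs b \<sigma> t i"
  shows "suffix_exceeds (\<lambda>s. (A s *v xs s) $ i / b $ i) r0 ((1 + \<eta>) / real n) (map \<sigma> [1..<Suc n])"
proof -
  define Q where "Q = (\<Sum>s=t..n. (A (\<sigma> s) *v xs (\<sigma> s)) $ i)"
  define m where "m = real n - real t + 1"
  have m: "0 < m" "real (length (map \<sigma> [1..<Suc n]) - (t - 1)) = m"
    using assms(1,3) by (auto simp: m_def of_nat_diff)
  have "b $ i / real n * (1 + \<eta>) < Q / m"
    using assms(5) by (simp add: Rti_def Q_def m_def algebra_simps add_divide_distrib)
  then have "(1 + \<eta>) / real n * m < Q / b $ i"
    using m(1) \<open>0 < b $ i\<close> by (simp add: pos_less_divide_eq field_simps)
  moreover have "sum_list (map (\<lambda>s. (A s *v xs s) $ i / b $ i) (drop (t - 1) (map \<sigma> [1..<Suc n])))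
      = Q / b $ i"
    using assms(1)
    by (simp del: upt_Suc add: drop_map interv_sum_list_conv_sum_set_nat atLeastLessThanSuc_atLeastAtMost
        Q_def sum_divide_distrib)
  ultimately show ?thesis
    unfolding suffix_exceeds_def using assms(1,2) m(2) by (intro exI[of _ "t - 1"]) (auto simp del: upt_Suc)
qed

lemma Rti_deviation_event_subset:
  fixes A :: "nat \<Rightarrow> real^'k::finite^'m::finite"
  assumes "\<forall>i. b $ i > 0" "0 < \<epsilon>" "\<epsilon> < 1" "real L = log 2 (1 / \<epsilon>)"
  shows "{\<sigma>. \<exists>t. 1 \<le> t \<and> real t \<le> real n * (1 - \<epsilon>) \<and>
            (\<exists>i. Rti n A xs b \<sigma> t i > b $ i / real n * 2 powr (- real_of_int (kappa n \<epsilon> t) / 2) * sqrt \<epsilon>)}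
    \<subseteq> (\<Union>(i, k)\<in>UNIV \<times> {1..L}.
          {\<sigma>. suffix_exceeds (\<lambda>s. (A s *v xs s) $ i / b $ i) (nat \<lceil>real n * \<epsilon> * 2 powr (real k - 1)\<rceil> + 1)
                 ((1 + 2 powr (- real k / 2) * sqrt \<epsilon>) / real n) (map \<sigma> [1..<Suc n])})"
proof (intro subsetI)
  fix \<sigma>
  assume "\<sigma> \<in> {\<sigma>. \<exists>t. 1 \<le> t \<and> real t \<le> real n * (1 - \<epsilon>) \<and>
            (\<exists>i. Rti n A xs b \<sigma> t i > b $ i / real n * 2 powr (- real_of_int (kappa n \<epsilon> t) / 2) * sqrt \<epsilon>)}"
  then obtain t i where t: "1 \<le> t" "real t \<le> real n * (1 - \<epsilon>)"
    and R: "Rti n A xs b \<sigma> t i > b $ i / real n * 2 powr (- real_of_int (kappa n \<epsilon> t) / 2) * sqrt \<epsilon>"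
    by blast
  obtain k where k: "k \<in> {1..L}" "kappa n \<epsilon> t = int k"
    and N: "real n * \<epsilon> * 2 powr (real k - 1) \<le> real n - real t"
    using kappa_dyadic_block[OF assms(2-4) t] by blast
  have "0 < n" using t assms(3) by (cases n) auto
  then have "real n * (1 - \<epsilon>) < real n" using assms(2) by (simp add: algebra_simps)
  then have "t < n" using t(2) by linarith
  have "\<lceil>real n * \<epsilon> * 2 powr (real k - 1)\<rceil> \<le> int (n - t)"
    using N \<open>t < n\<close> by (simp add: ceiling_le_iff of_nat_diff)
  then have "t + (nat \<lceil>real n * \<epsilon> * 2 powr (real k - 1)\<rceil> + 1) \<le> Suc n"
    using \<open>t < n\<close> by linarith
  then have "suffix_exceeds (\<lambda>s. (A s *v xs s) $ i / b $ i) (nat \<lceil>real n * \<epsilon> * 2 powr (real k - 1)\<rceil> + 1)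
                 ((1 + 2 powr (- real k / 2) * sqrt \<epsilon>) / real n) (map \<sigma> [1..<Suc n])"
    using R k t \<open>t < n\<close> assms(1) by (intro suffix_exceeds_if_Rti_gt) (simp_all add: mult.assoc)
  then show "\<sigma> \<in> (\<Union>(i, k)\<in>UNIV \<times> {1..L}.
          {\<sigma>. suffix_exceeds (\<lambda>s. (A s *v xs s) $ i / b $ i) (nat \<lceil>real n * \<epsilon> * 2 powr (real k - 1)\<rceil> + 1)
                 ((1 + 2 powr (- real k / 2) * sqrt \<epsilon>) / real n) (map \<sigma> [1..<Suc n])})"
    using k by blast
qed

lemma le_half_if_log2_inverse_nat:
  assumes "0 < \<epsilon>" "\<epsilon> < 1" "real L = log 2 (1 / \<epsilon>)"
  shows "\<epsilon> \<le> 1/2"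
proof -
  have "0 < real L" using assms by simp
  then have "(2::real) powr 1 \<le> 2 powr real L" by (intro powr_mono) auto
  also have "2 powr real L = 1 / \<epsilon>" using assms by simp
  finally show ?thesis using assms(1) by (simp add: field_simps)
qed

theorem mainTheorem6:
  fixes n :: nat
    and b :: "real^'m::finite"
    and f :: "nat \<Rightarrow> real^'k::finite \<Rightarrow> ereal"
    and A :: "nat \<Rightarrow> real^'k^'m"
    and Pstar \<gamma> \<epsilon> :: real
    and L :: nat
    and xs :: "nat \<Rightarrow> real^'k"
    and y :: "real^'m"
  assumes n_pos: "n > 0"
    and b_pos: "\<forall>i. b $ i > 0"
    and fG: "\<forall>t\<in>{1..n}. classG (f t)"
    and A_nonneg: "\<forall>t\<in>{1..n}. \<forall>i j. A t $ i $ j \<ge> 0"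
    and Pstar_def: "ereal Pstar = (SUP x\<in>{x. \<forall>i. (\<Sum>t=1..n. A t *v x t) $ i \<le> b $ i}. \<Sum>t=1..n. f t (x t))"
    and Pstar_pos: "Pstar > 0"
    and gamma_pos: "\<gamma> > 0"
    and gamma_A: "\<forall>t\<in>{1..n}. \<forall>x. f t x \<ge> 0 \<longrightarrow> (\<forall>i. (A t *v x) $ i / b $ i \<le> \<gamma>)"
    and gamma_f: "\<forall>t\<in>{1..n}. \<forall>x\<in>edom (f t). f t x \<le> ereal (\<gamma> * Pstar)"
    and eps: "0 < \<epsilon>" "\<epsilon> < 1"
    and L_def: "real L = log 2 (1 / \<epsilon>)"
    and neps_int: "real n * \<epsilon> \<in> \<int>"
    and xs_feas: "\<forall>i. (\<Sum>t=1..n. A t *v xs t) $ i \<le> b $ i"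
    and xs_opt: "(\<Sum>t=1..n. f t (xs t)) = ereal Pstar"
    and y_nonneg: "\<forall>i. y $ i \<ge> 0"
    and y_slack: "\<forall>i. (\<Sum>t=1..n. A t *v xs t) $ i < b $ i \<longrightarrow> y $ i = 0"
    and y_super: "\<forall>t\<in>{1..n}. supergradient (f t) (xs t) (transpose (A t) *v y)"
  shows "measure_pmf.prob (pmf_of_set {\<sigma>. \<sigma> permutes {1..n}})
           {\<sigma>. \<exists>t. 1 \<le> t \<and> real t \<le> real n * (1 - \<epsilon>) \<and>
                 (\<exists>i. Rti n A xs b \<sigma> t i > b $ i / real n * 2 powr (- real_of_int (kappa n \<epsilon> t) / 2) * sqrt \<epsilon>)}
         \<le> real CARD('m) * real L * exp (- (\<epsilon>^2) / (6 * \<gamma>))"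
proof -
  define B where "B = (\<lambda>(i, k). {\<sigma>. suffix_exceeds (\<lambda>s. (A s *v xs s) $ i / b $ i)
      (nat \<lceil>real n * \<epsilon> * 2 powr (real k - 1)\<rceil> + 1) ((1 + 2 powr (- real k / 2) * sqrt \<epsilon>) / real n)
      (map \<sigma> [1..<Suc n])})"
  let ?M = "pmf_of_set {\<sigma>. \<sigma> permutes {1..n}}"
  have bounds: "\<forall>s\<in>{1..n}. 0 \<le> (A s *v xs s) $ i / b $ i \<and> (A s *v xs s) $ i / b $ i \<le> \<gamma>" for i
    using optimal_load_fraction_bounds[OF b_pos fG A_nonneg Pstar_def gamma_A xs_feas xs_opt] by blast
  have load: "(\<Sum>s=1..n. (A s *v xs s) $ i / b $ i) \<le> 1" for i
    using xs_feas b_pos[rule_format, of i] by (simp add: sum_divide_distrib[symmetric])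
  have block: "measure_pmf.prob ?M (B ik) \<le> exp (- (\<epsilon>^2) / (6 * \<gamma>))" if "ik \<in> UNIV \<times> {1..L}" for ik
    using that prob_suffix_exceeds_dyadic_block_le[OF n_pos bounds gamma_pos load eps(1)
        le_half_if_log2_inverse_nat[OF eps L_def]]
    by (auto simp: B_def)
  have "measure_pmf.prob ?M {\<sigma>. \<exists>t. 1 \<le> t \<and> real t \<le> real n * (1 - \<epsilon>) \<and>
                 (\<exists>i. Rti n A xs b \<sigma> t i > b $ i / real n * 2 powr (- real_of_int (kappa n \<epsilon> t) / 2) * sqrt \<epsilon>)}
      \<le> measure_pmf.prob ?M (\<Union>ik\<in>UNIV \<times> {1..L}. B ik)"
    using Rti_deviation_event_subset[OF b_pos eps L_def, of n A xs]
    unfolding B_def by (intro measure_pmf.finite_measure_mono) auto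
  also have "\<dots> \<le> (\<Sum>ik\<in>UNIV \<times> {1..L}. measure_pmf.prob ?M (B ik))"
    by (intro measure_pmf.finite_measure_subadditive_finite) auto
  also have "\<dots> \<le> (\<Sum>ik\<in>(UNIV :: 'm set) \<times> {1..L}. exp (- (\<epsilon>^2) / (6 * \<gamma>)))"
    by (intro sum_mono block)
  also have "\<dots> = real CARD('m) * real L * exp (- (\<epsilon>^2) / (6 * \<gamma>))"
    by (simp add: card_cartesian_product)
  finally show ?thesis .
qed

end
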